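(* Let $\mathscr{H}$ be a complex Hilbert space and let $B,C$ be Hilbert–Schmidt operators on $\mathscr{H}$. Then $$w_{(2,e)}^2(B,C)\geq\frac14\,|\mathrm{tr}(B^2)+\mathrm{tr}(C^2)+2\,\mathrm{tr}(BC)|+\frac14\left(\|B\|_2^2+\|C\|_2^2+2\,\mathrm{Re}(\mathrm{tr}(BC^* ))\right),$$ where $\mathrm{Re}(z)$ denotes the real part of $z\in\mathbb{C}$.
   Context: An operator $T$ on $\mathscr{H}$ is Hilbert–Schmidt if $\sum_i\|Te_i\|^2<\infty$ for some (equivalently every) orthonormal basis $\{e_i\}$; its Hilbert–Schmidt norm is $\|T\|_2=(\sum_i\|Te_i\|^2)^{1/2}=(\mathrm{tr}(T^*T))^{1/2}$. For an operator $T$, $\Re(T)=\frac12(T+T^* )$. The Hilbert–Schmidt Euclidean operator radius is $w_{(2,e)}(B,C)=\sup_{\lambda_1,\lambda_2\in\mathbb{C},\ |\lambda_1|^2+|\lambda_2|^2\leq1}\sup_{\theta\in\mathbb{R}}\|\Re(e^{i\theta}(\lambda_1B+\lambda_2C))\|_2$. *)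

theory Defs
  imports "HOL-Analysis.Analysis"
begin

class scaleC =
  fixes scaleC :: "complex \<Rightarrow> 'a \<Rightarrow> 'a" (infixr \<open>*\<^sub>C\<close> 75)

class complex_vector = real_vector + scaleC +
  assumes scaleC_add_right: "a *\<^sub>C (x + y) = a *\<^sub>C x + a *\<^sub>C y"
    and scaleC_add_left: "(a + b) *\<^sub>C x = a *\<^sub>C x + b *\<^sub>C x"
    and scaleC_scaleC: "a *\<^sub>C (b *\<^sub>C x) = (a * b) *\<^sub>C x"
    and scaleC_one: "1 *\<^sub>C x = x"
    and scaleC_of_real: "(complex_of_real r) *\<^sub>C x = r *\<^sub>R x"

class complex_inner = complex_vector + real_normed_vector +
  fixes cinner :: "'a \<Rightarrow> 'a \<Rightarrow> complex"
  assumes cinner_commute: "cinner x y = cnj (cinner y x)"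
    and cinner_add_left: "cinner (x + y) z = cinner x z + cinner y z"
    and cinner_scaleC_left: "cinner (a *\<^sub>C x) y = cnj a * cinner x y"
    and cinner_self_real: "Im (cinner x x) = 0"
    and cinner_self_nonneg: "0 \<le> Re (cinner x x)"
    and cinner_self_eq_zero: "cinner x x = 0 \<longleftrightarrow> x = 0"
    and norm_eq_sqrt_cinner: "norm x = sqrt (Re (cinner x x))"

class chilbert_space = complex_inner + complete_space

instantiation complex :: chilbert_space
begin
definition scaleC_complex_def: "scaleC a (x::complex) = a * x"
definition cinner_complex_def: "cinner (x::complex) y = cnj x * y"
instance
proof
  fix x y z :: complex and a b :: complex and r :: real
  show "a *\<^sub>C (x + y) = a *\<^sub>C x + a *\<^sub>C y" by (simp add: scaleC_complex_def algebra_simps)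
  show "(a + b) *\<^sub>C x = a *\<^sub>C x + b *\<^sub>C x" by (simp add: scaleC_complex_def algebra_simps)
  show "a *\<^sub>C (b *\<^sub>C x) = (a * b) *\<^sub>C x" by (simp add: scaleC_complex_def algebra_simps)
  show "1 *\<^sub>C x = x" by (simp add: scaleC_complex_def)
  show "complex_of_real r *\<^sub>C x = r *\<^sub>R x" by (simp add: scaleC_complex_def scaleR_conv_of_real)
  show "cinner x y = cnj (cinner y x)" by (simp add: cinner_complex_def mult.commute)
  show "cinner (x + y) z = cinner x z + cinner y z" by (simp add: cinner_complex_def algebra_simps)
  show "cinner (a *\<^sub>C x) y = cnj a * cinner x y" by (simp add: cinner_complex_def scaleC_complex_def)
  show "Im (cinner x x) = 0" by (simp add: cinner_complex_def)
  show "0 \<le> Re (cinner x x)" by (simp add: cinner_complex_def)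
  show "(cinner x x = 0) = (x = 0)" by (simp add: cinner_complex_def)
  show "norm x = sqrt (Re (cinner x x))"
    by (simp add: cinner_complex_def cmod_def power2_eq_square)
qed
end

definition bounded_clinear :: "('a::complex_inner \<Rightarrow> 'a) \<Rightarrow> bool" where
  "bounded_clinear T \<longleftrightarrow>
     (\<forall>x y. T (x + y) = T x + T y) \<and> (\<forall>c x. T (c *\<^sub>C x) = c *\<^sub>C T x) \<and>
     (\<exists>K. \<forall>x. norm (T x) \<le> norm x * K)"

text \<open>The adjoint (exists and is unique for bounded operators on a Hilbert space).\<close>

definition adj :: "('a::complex_inner \<Rightarrow> 'a) \<Rightarrow> ('a \<Rightarrow> 'a)" where
  "adj T = (SOME S. \<forall>x y. cinner (T x) y = cinner x (S y))"

definition op_Re :: "('a::complex_inner \<Rightarrow> 'a) \<Rightarrow> ('a \<Rightarrow> 'a)" where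
  "op_Re T = (\<lambda>x. (1/2::complex) *\<^sub>C (T x + adj T x))"

definition is_onb :: "'a::complex_inner set \<Rightarrow> bool" where
  "is_onb E \<longleftrightarrow> (\<forall>e\<in>E. norm e = 1) \<and> (\<forall>e\<in>E. \<forall>f\<in>E. e \<noteq> f \<longrightarrow> cinner e f = 0) \<and>
     (\<forall>x. (\<forall>e\<in>E. cinner e x = 0) \<longrightarrow> x = 0)"

definition some_onb :: "'a::complex_inner set" where
  "some_onb = (SOME E. is_onb E)"

definition hilbert_schmidt :: "('a::complex_inner \<Rightarrow> 'a) \<Rightarrow> bool" where
  "hilbert_schmidt T \<longleftrightarrow> bounded_clinear T \<and>
     (\<exists>E. is_onb E \<and> (\<lambda>e. (norm (T e))\<^sup>2) summable_on E)"

definition hs_norm :: "('a::complex_inner \<Rightarrow> 'a) \<Rightarrow> real" where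
  "hs_norm T = sqrt (infsum (\<lambda>e. (norm (T e))\<^sup>2) some_onb)"

definition trace :: "('a::complex_inner \<Rightarrow> 'a) \<Rightarrow> complex" where
  "trace T = infsum (\<lambda>e. cinner e (T e)) some_onb"

definition w2e :: "('a::complex_inner \<Rightarrow> 'a) \<Rightarrow> ('a \<Rightarrow> 'a) \<Rightarrow> real" where
  "w2e B C = (SUP p \<in> {(l1, l2, \<theta>). (cmod l1)\<^sup>2 + (cmod l2)\<^sup>2 \<le> 1}.
      (case p of (l1, l2, \<theta>) \<Rightarrow>
        hs_norm (op_Re (\<lambda>x. exp (\<i> * complex_of_real \<theta>) *\<^sub>C (l1 *\<^sub>C B x + l2 *\<^sub>C C x)))))"

end

theory Submission
  imports Defs
begin

text \<open>
  Take \<lambda>1 = \<lambda>2 = 1/sqrt 2 and \<theta> = -arg(Z)/2, where Z = tr(B^2) + tr(C^2) + 2 tr(BC), so that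
  the operator inside the supremum is S = e^(i\<theta>) (B + C)/sqrt 2. For a Hilbert-Schmidt operator T,
  expanding ||(T + T^*) e||^2 over an orthonormal basis and using ||T^*||_2 = ||T||_2 gives
  ||Re T||_2^2 = ||T||_2^2/2 + Re tr(T^2)/2. Since tr(CB) = tr(BC), tr(S^2) = e^(2i\<theta>) Z/2 has real
  part |Z|/2, and ||S||_2^2 = ||B + C||_2^2/2 = (||B||_2^2 + ||C||_2^2 + 2 Re tr(BC^*))/2.

  The Hilbert-Schmidt facts used (existence of T^*, independence of ||T||_2 from the basis,
  ||T^*||_2 = ||T||_2 and tr(XY) = tr(YX)) all come from Parseval's identity, which holds for
  maximal orthonormal sets because the space is complete, and from interchanging the order of
  summation in absolutely summable double series.
\<close>

instance chilbert_space \<subseteq> banach ..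

section \<open>Complex inner product spaces\<close>

lemma cinner_add_right: "cinner x (y + z) = cinner x y + cinner x z"
  by (metis cinner_commute cinner_add_left complex_cnj_add)

lemma cinner_scaleC_right: "cinner x (a *\<^sub>C y) = a * cinner x y"
  by (metis cinner_commute cinner_scaleC_left complex_cnj_cnj complex_cnj_mult)

lemma cinner_zero_left [simp]: "cinner 0 y = 0"
  using cinner_add_left[of 0 0 y] by simp

lemma cinner_zero_right [simp]: "cinner x 0 = 0"
  using cinner_add_right[of x 0 0] by simp

lemma cinner_diff_right: "cinner x (y - z) = cinner x y - cinner x z"
  by (metis add_diff_cancel_right' cinner_add_right diff_add_cancel)

lemma scaleR_scaleC: "r *\<^sub>R (x::'a::complex_vector) = complex_of_real r *\<^sub>C x"
  by (simp add: scaleC_of_real)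

lemma cinner_sum_left: "cinner (sum f F) x = (\<Sum>i\<in>F. cinner (f i) x)"
  by (induction F rule: infinite_finite_induct) (auto simp: cinner_add_left)

lemma cinner_sum_right: "cinner x (sum f F) = (\<Sum>i\<in>F. cinner x (f i))"
  by (induction F rule: infinite_finite_induct) (auto simp: cinner_add_right)

lemma cinner_self: "cinner x x = complex_of_real ((norm x)\<^sup>2)"
  using cinner_self_real[of x] cinner_self_nonneg[of x] norm_eq_sqrt_cinner[of x]
  by (simp add: complex_eq_iff)

lemma Re_cinner_self: "Re (cinner x x) = (norm x)\<^sup>2"
  by (simp add: cinner_self)

lemma norm_scaleC: "norm (a *\<^sub>C (x::'a::complex_inner)) = cmod a * norm x"
proof -
  have "cinner (a *\<^sub>C x) (a *\<^sub>C x) = (a * cnj a) * cinner x x"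
    by (simp add: cinner_scaleC_left cinner_scaleC_right mult_ac)
  also have "\<dots> = complex_of_real ((cmod a * norm x)\<^sup>2)"
    by (simp add: complex_norm_square[symmetric] cinner_self power_mult_distrib)
  finally have "(norm (a *\<^sub>C x))\<^sup>2 = (cmod a * norm x)\<^sup>2"
    by (metis Re_cinner_self Re_complex_of_real)
  then show ?thesis by (simp add: power2_eq_iff_nonneg)
qed

lemma norm_add_sq: "(norm (x + y))\<^sup>2 = (norm x)\<^sup>2 + (norm y)\<^sup>2 + 2 * Re (cinner x y)"
proof -
  have "cinner (x + y) (x + y) = cinner x x + cinner y y + cinner x y + cnj (cinner x y)"
    by (simp add: cinner_add_left cinner_add_right cinner_commute[of y x])
  then have "Re (cinner (x + y) (x + y)) = Re (cinner x x) + Re (cinner y y) + 2 * Re (cinner x y)"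
    by simp
  then show ?thesis by (simp add: Re_cinner_self)
qed

lemma norm_diff_sq: "(norm (x - y))\<^sup>2 = (norm x)\<^sup>2 + (norm y)\<^sup>2 - 2 * Re (cinner x y)"
  using norm_add_sq[of x "- y"] cinner_diff_right[of x 0 y] by simp

lemma norm_add_sq_le: "(norm (x + y))\<^sup>2 \<le> 2 * ((norm x)\<^sup>2 + (norm (y::'a::real_normed_vector))\<^sup>2)"
proof -
  have "(norm (x + y))\<^sup>2 \<le> (norm x + norm y)\<^sup>2"
    by (simp add: norm_triangle_ineq power_mono)
  also have "\<dots> \<le> 2 * ((norm x)\<^sup>2 + (norm y)\<^sup>2)"
    using sum_squares_bound[of "norm x" "norm y"] by (simp add: power2_sum)
  finally show ?thesis .
qed

lemma norm_cinner_le: "cmod (cinner x y) \<le> norm x * norm y"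
proof (cases "y = 0")
  case False
  then have ny: "norm y > 0" by simp
  define t where "t = cinner y x / complex_of_real ((norm y)\<^sup>2)"
  have "0 \<le> (norm (x - t *\<^sub>C y))\<^sup>2" by simp
  also have "\<dots> = (norm x)\<^sup>2 + (cmod t)\<^sup>2 * (norm y)\<^sup>2 - 2 * Re (cinner x (t *\<^sub>C y))"
    by (simp add: norm_diff_sq norm_scaleC power_mult_distrib)
  also have "cinner x (t *\<^sub>C y) = t * cnj (cinner y x)"
    by (simp add: cinner_scaleC_right cinner_commute[of x y])
  also have "Re (t * cnj (cinner y x)) = (cmod (cinner y x))\<^sup>2 / (norm y)\<^sup>2"
    unfolding t_def using ny
    by (simp add: complex_mult_cnj[symmetric] del: complex_mult_cnj)
       (simp add: Re_divide_of_real cmod_power2 flip: power2_eq_square)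
  also have "(cmod t)\<^sup>2 = (cmod (cinner y x))\<^sup>2 / (norm y)^4"
    unfolding t_def by (simp add: norm_divide power_divide norm_power flip: power_mult)
  finally have "(cmod (cinner y x))\<^sup>2 \<le> (norm x)\<^sup>2 * (norm y)\<^sup>2"
    using ny by (simp add: field_simps power2_eq_square power4_eq_xxxx)
  then have "(cmod (cinner x y))\<^sup>2 \<le> (norm x * norm y)\<^sup>2"
    by (metis cinner_commute complex_mod_cnj power_mult_distrib)
  then show ?thesis by (simp add: power2_le_iff_abs_le)
qed simp

lemma bounded_linear_cinner_right: "bounded_linear (cinner x)"
proof
  show "cinner x (r *\<^sub>R y) = r *\<^sub>R cinner x y" for r y
    by (simp add: scaleR_scaleC cinner_scaleC_right scaleC_complex_def)
  show "\<exists>K. \<forall>y. norm (cinner x y) \<le> norm y * K"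
    by (metis norm_cinner_le mult.commute)
qed (rule cinner_add_right)

lemma bounded_linear_cinner_left: "bounded_linear (\<lambda>x. cinner x y)"
proof
  show "cinner (r *\<^sub>R x) y = r *\<^sub>R cinner x y" for r x
    by (simp add: scaleR_scaleC cinner_scaleC_left scaleC_complex_def)
  show "\<exists>K. \<forall>x. norm (cinner x y) \<le> norm x * K"
    using norm_cinner_le by blast
qed (rule cinner_add_left)

lemma cinner_eqI: "(\<And>z. cinner z a = cinner z b) \<Longrightarrow> a = b"
  by (metis cinner_diff_right cinner_self_eq_zero eq_iff_diff_eq_0)

section \<open>Unordered sums\<close>

lemma summable_on_if_small_tails:
  fixes f :: "'i \<Rightarrow> 'b::banach"
  assumes tails: "\<And>\<epsilon>. \<epsilon> > 0 \<Longrightarrow>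
      \<exists>F0. finite F0 \<and> F0 \<subseteq> A \<and> (\<forall>G. finite G \<and> G \<subseteq> A - F0 \<longrightarrow> norm (sum f G) < \<epsilon>)"
  shows "f summable_on A"
proof -
  have "\<exists>P. eventually P (finite_subsets_at_top A) \<and>
            (\<forall>F F'. P F \<and> P F' \<longrightarrow> dist (sum f F) (sum f F') < \<epsilon>)" if "\<epsilon> > 0" for \<epsilon>
  proof -
    obtain F0 where F0: "finite F0" "F0 \<subseteq> A"
      and small: "\<And>G. finite G \<Longrightarrow> G \<subseteq> A - F0 \<Longrightarrow> norm (sum f G) < \<epsilon> / 2"
      using tails[of "\<epsilon> / 2"] \<open>\<epsilon> > 0\<close> by auto
    define P where "P F \<longleftrightarrow> finite F \<and> F0 \<subseteq> F \<and> F \<subseteq> A" for F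
    have "eventually P (finite_subsets_at_top A)"
      unfolding P_def eventually_finite_subsets_at_top using F0 by blast
    moreover have "dist (sum f F) (sum f F') < \<epsilon>" if "P F" "P F'" for F F'
    proof -
      have split: "sum f F = sum f F0 + sum f (F - F0)" if "P F" for F
        using that unfolding P_def by (metis add.commute sum.subset_diff)
      have "dist (sum f F) (sum f F') = norm (sum f (F - F0) - sum f (F' - F0))"
        using split[OF \<open>P F\<close>] split[OF \<open>P F'\<close>] by (simp add: dist_norm)
      also have "\<dots> \<le> norm (sum f (F - F0)) + norm (sum f (F' - F0))"
        by (rule norm_triangle_ineq4)
      also have "\<dots> < \<epsilon> / 2 + \<epsilon> / 2"
        using that by (intro add_strict_mono small) (auto simp: P_def)
      finally show ?thesis by simp
    qed
    ultimately show ?thesis by blast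
  qed
  then have "cauchy_filter (filtermap (sum f) (finite_subsets_at_top A))"
    by (simp add: cauchy_filter_metric_filtermap)
  moreover have "complete (UNIV::'b set)"
    by (meson Cauchy_convergent UNIV_I complete_def convergent_def)
  ultimately obtain L where "(sum f \<longlongrightarrow> L) (finite_subsets_at_top A)"
    using complete_uniform[where S=UNIV] by (force simp add: filterlim_def)
  then show ?thesis
    unfolding summable_on_def has_sum_def by blast
qed

lemma summable_on_if_norm_sq_le:
  fixes f :: "'i \<Rightarrow> 'b::banach" and g :: "'i \<Rightarrow> real"
  assumes g: "g summable_on A" and g_nonneg: "\<And>x. x \<in> A \<Longrightarrow> g x \<ge> 0"
    and le: "\<And>G. finite G \<Longrightarrow> G \<subseteq> A \<Longrightarrow> (norm (sum f G))\<^sup>2 \<le> sum g G"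
  shows "f summable_on A"
proof (rule summable_on_if_small_tails)
  fix \<epsilon> :: real assume "\<epsilon> > 0"
  then obtain F0 where F0: "finite F0" "F0 \<subseteq> A" and approx: "dist (sum g F0) (infsum g A) \<le> \<epsilon>\<^sup>2 / 2"
    using infsum_finite_approximation[OF g, of "\<epsilon>\<^sup>2 / 2"] by auto
  have "norm (sum f G) < \<epsilon>" if G: "finite G" "G \<subseteq> A - F0" for G
  proof -
    have "sum g F0 + sum g G = sum g (F0 \<union> G)"
      using F0 G by (subst sum.union_disjoint) auto
    also have "\<dots> \<le> infsum g A"
      using F0 G g_nonneg by (intro finite_sum_le_infsum g) auto
    finally have "sum g G \<le> \<epsilon>\<^sup>2 / 2"
      using approx unfolding dist_real_def by arith
    moreover have "(norm (sum f G))\<^sup>2 \<le> sum g G"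
      using G by (intro le) auto
    ultimately have "(norm (sum f G))\<^sup>2 < \<epsilon>\<^sup>2"
      using zero_less_power[OF \<open>\<epsilon> > 0\<close>, of 2] by linarith
    then show ?thesis
      using \<open>\<epsilon> > 0\<close> by (simp add: power_less_imp_less_base)
  qed
  then show "\<exists>F0. finite F0 \<and> F0 \<subseteq> A \<and> (\<forall>G. finite G \<and> G \<subseteq> A - F0 \<longrightarrow> norm (sum f G) < \<epsilon>)"
    using F0 by blast
qed

lemma has_sum_iterated_swap:
  fixes q :: "'x \<Rightarrow> 'y \<Rightarrow> 'b::{topological_comm_monoid_add, t3_space}"
  assumes q: "(\<lambda>(x, y). q x y) summable_on A \<times> B"
    and rows: "\<And>x. x \<in> A \<Longrightarrow> (q x has_sum r x) B"
    and cols: "\<And>y. y \<in> B \<Longrightarrow> ((\<lambda>x. q x y) has_sum c y) A"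
  obtains t where "(r has_sum t) A" and "(c has_sum t) B"
proof -
  obtain t where t: "((\<lambda>(x, y). q x y) has_sum t) (A \<times> B)"
    using q unfolding summable_on_def by blast
  have "(r has_sum t) A"
    by (rule has_sum_SigmaD[OF t]) (use rows in auto)
  moreover have "((\<lambda>(y, x). q x y) has_sum t) (B \<times> A)"
    using t by (subst (asm) has_sum_swap) simp
  then have "(c has_sum t) B"
    by (rule has_sum_SigmaD) (use cols in auto)
  ultimately show ?thesis
    by (rule that)
qed

lemma nonneg_has_sum_iterated_swap:
  fixes q :: "'x \<Rightarrow> 'y \<Rightarrow> real"
  assumes nonneg: "\<And>x y. x \<in> A \<Longrightarrow> y \<in> B \<Longrightarrow> q x y \<ge> 0"
    and rows: "\<And>x. x \<in> A \<Longrightarrow> (q x has_sum r x) B" and r: "(r has_sum s) A"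
    and cols: "\<And>y. y \<in> B \<Longrightarrow> ((\<lambda>x. q x y) has_sum c y) A"
  shows "(c has_sum s) B"
proof -
  have "(\<lambda>(x, y). q x y) summable_on A \<times> B"
    by (rule summable_on_SigmaI[where g = r]) (use rows r nonneg in \<open>auto simp: summable_on_def\<close>)
  then obtain t where "(r has_sum t) A" "(c has_sum t) B"
    using rows cols by (rule has_sum_iterated_swap)
  with r show ?thesis
    using has_sum_unique by blast
qed

section \<open>Orthonormal bases\<close>

lemma onb_cinner:
  assumes "is_onb E" "e \<in> E" "f \<in> E"
  shows "cinner e f = (if e = f then 1 else 0)"
  using assms unfolding is_onb_def by (auto simp: cinner_self)

lemma norm_sq_sum_onb:
  assumes E: "is_onb E" and F: "finite F" "F \<subseteq> E"
  shows "(norm (\<Sum>f\<in>F. c f *\<^sub>C f))\<^sup>2 = (\<Sum>f\<in>F. (cmod (c f))\<^sup>2)"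
proof -
  let ?s = "\<Sum>f\<in>F. c f *\<^sub>C f"
  have coeff: "cinner g ?s = c g" if "g \<in> F" for g
  proof -
    have "cinner g f = (if g = f then 1 else 0)" if "f \<in> F" for f
      using that \<open>g \<in> F\<close> F(2) by (simp add: onb_cinner[OF E] subsetD)
    then have "cinner g ?s = (\<Sum>f\<in>F. if g = f then c f else 0)"
      unfolding cinner_sum_right cinner_scaleC_right by (intro sum.cong) auto
    then show ?thesis
      using that F by simp
  qed
  have "cinner ?s ?s = (\<Sum>g\<in>F. cnj (c g) * cinner g ?s)"
    unfolding cinner_sum_left cinner_scaleC_left ..
  also have "\<dots> = (\<Sum>g\<in>F. complex_of_real ((cmod (c g))\<^sup>2))"
    by (intro sum.cong refl) (metis coeff complex_norm_square mult.commute)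
  finally show ?thesis
    by (metis Re_cinner_self Re_complex_of_real of_real_sum)
qed

lemma bessel_inequality:
  assumes "is_onb E" "finite F" "F \<subseteq> E"
  shows "(\<Sum>f\<in>F. (cmod (cinner f x))\<^sup>2) \<le> (norm x)\<^sup>2"
proof -
  let ?s = "\<Sum>f\<in>F. cinner f x *\<^sub>C f"
  have "cinner x ?s = (\<Sum>f\<in>F. complex_of_real ((cmod (cinner f x))\<^sup>2))"
    unfolding cinner_sum_right cinner_scaleC_right
    by (intro sum.cong refl) (metis cinner_commute complex_norm_square)
  then have "Re (cinner x ?s) = (\<Sum>f\<in>F. (cmod (cinner f x))\<^sup>2)"
    by simp
  moreover have "0 \<le> (norm (x - ?s))\<^sup>2"
    by simp
  ultimately show ?thesis
    unfolding norm_diff_sq using norm_sq_sum_onb[OF assms, of "\<lambda>f. cinner f x"] by simp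
qed

lemma summable_on_onb_coeff_sq:
  assumes "is_onb E"
  shows "(\<lambda>f. (cmod (cinner f x))\<^sup>2) summable_on E"
  by (rule nonneg_bdd_above_summable_on)
     (auto intro!: bdd_aboveI[where M = "(norm x)\<^sup>2"] bessel_inequality[OF assms])

lemma summable_on_onb_combination:
  fixes E :: "'a::chilbert_space set"
  assumes "is_onb E" and "(\<lambda>f. (cmod (c f))\<^sup>2) summable_on E"
  shows "(\<lambda>f. c f *\<^sub>C f) summable_on E"
  by (rule summable_on_if_norm_sq_le[OF assms(2)]) (auto simp: norm_sq_sum_onb[OF assms(1)])

lemma has_sum_onb_expansion:
  fixes E :: "'a::chilbert_space set"
  assumes E: "is_onb E"
  shows "((\<lambda>f. cinner f x *\<^sub>C f) has_sum x) E"
proof -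
  obtain y where y: "((\<lambda>f. cinner f x *\<^sub>C f) has_sum y) E"
    using summable_on_onb_combination[OF E summable_on_onb_coeff_sq[OF E]]
    unfolding summable_on_def by blast
  have "cinner g y = cinner g x" if g: "g \<in> E" for g
  proof -
    have "((\<lambda>f. cinner g (cinner f x *\<^sub>C f)) has_sum cinner g y) E"
      by (rule has_sum_bounded_linear[OF bounded_linear_cinner_right y])
    moreover have "((\<lambda>f. cinner g (cinner f x *\<^sub>C f)) has_sum cinner g x) E"
      by (rule has_sum_finite_neutralI[of "{g}"])
         (use g in \<open>auto simp: cinner_scaleC_right onb_cinner[OF E]\<close>)
    ultimately show ?thesis
      by (rule has_sum_unique)
  qed
  then have "x = y"
    using E unfolding is_onb_def by (metis cinner_diff_right eq_iff_diff_eq_0)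
  with y show ?thesis by simp
qed

lemma has_sum_parseval_cinner:
  fixes E :: "'a::chilbert_space set"
  assumes "is_onb E"
  shows "((\<lambda>f. cinner x f * cinner f y) has_sum cinner x y) E"
proof -
  have "((\<lambda>f. cinner x (cinner f y *\<^sub>C f)) has_sum cinner x y) E"
    by (rule has_sum_bounded_linear[OF bounded_linear_cinner_right has_sum_onb_expansion[OF assms]])
  then show ?thesis
    by (simp add: cinner_scaleC_right mult.commute)
qed

lemma has_sum_parseval:
  fixes E :: "'a::chilbert_space set"
  assumes "is_onb E"
  shows "((\<lambda>f. (cmod (cinner f x))\<^sup>2) has_sum (norm x)\<^sup>2) E"
proof -
  have "cinner x f * cinner f x = complex_of_real ((cmod (cinner f x))\<^sup>2)" for f
    by (metis cinner_commute complex_norm_square mult.commute)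
  then have "((\<lambda>f. complex_of_real ((cmod (cinner f x))\<^sup>2)) has_sum complex_of_real ((norm x)\<^sup>2)) E"
    using has_sum_parseval_cinner[OF assms, of x x] by (simp add: cinner_self)
  then show ?thesis
    by (simp only: has_sum_of_real_iff)
qed

lemma summable_on_onb_coeff_sq_Times:
  fixes E :: "'a::chilbert_space set"
  assumes E: "is_onb E" and V: "(\<lambda>f. (norm (V f))\<^sup>2) summable_on A"
  shows "(\<lambda>(f, e). (cmod (cinner e (V f)))\<^sup>2) summable_on A \<times> E"
  by (rule summable_on_SigmaI[OF _ V]) (auto intro: has_sum_parseval[OF E])

section \<open>Adjoints\<close>

definition adjoint_pair :: "('a::complex_inner \<Rightarrow> 'a) \<Rightarrow> ('a \<Rightarrow> 'a) \<Rightarrow> bool" where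
  "adjoint_pair T T' \<longleftrightarrow> (\<forall>x y. cinner (T x) y = cinner x (T' y))"

lemma adjoint_pair_sym: "adjoint_pair T T' \<Longrightarrow> adjoint_pair T' T"
  unfolding adjoint_pair_def by (metis cinner_commute)

lemma adjoint_pair_adj:
  assumes "adjoint_pair T T'"
  shows "adjoint_pair T (adj T)"
  using assms unfolding adjoint_pair_def adj_def
  by (rule someI[where P = "\<lambda>S. \<forall>x y. cinner (T x) y = cinner x (S y)"])

lemma bounded_clinear_add_apply: "bounded_clinear T \<Longrightarrow> T (x + y) = T x + T y"
  unfolding bounded_clinear_def by blast

lemma bounded_clinear_scaleC_apply: "bounded_clinear T \<Longrightarrow> T (a *\<^sub>C x) = a *\<^sub>C T x"
  unfolding bounded_clinear_def by blast

lemma bounded_clinear_bounded_linear: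
  assumes "bounded_clinear T"
  shows "bounded_linear T"
proof
  show "T (x + y) = T x + T y" for x y
    using assms by (rule bounded_clinear_add_apply)
  show "T (r *\<^sub>R x) = r *\<^sub>R T x" for r x
    using bounded_clinear_scaleC_apply[OF assms] by (simp add: scaleR_scaleC)
  show "\<exists>K. \<forall>x. norm (T x) \<le> norm x * K"
    using assms unfolding bounded_clinear_def by blast
qed

lemma bounded_clinear_scaleC:
  assumes "bounded_clinear T"
  shows "bounded_clinear (\<lambda>x. c *\<^sub>C T x)"
proof -
  obtain K where K: "\<And>x. norm (T x) \<le> norm x * K"
    using assms unfolding bounded_clinear_def by blast
  have "norm (c *\<^sub>C T x) \<le> norm x * (cmod c * K)" for x
    using mult_left_mono[OF K norm_ge_zero[of c]] by (simp add: norm_scaleC mult_ac)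
  moreover have "c *\<^sub>C T (x + y) = c *\<^sub>C T x + c *\<^sub>C T y" for x y
    by (simp add: bounded_clinear_add_apply[OF assms] scaleC_add_right)
  moreover have "c *\<^sub>C T (a *\<^sub>C x) = a *\<^sub>C c *\<^sub>C T x" for a x
    by (simp add: bounded_clinear_scaleC_apply[OF assms] scaleC_scaleC mult.commute)
  ultimately show ?thesis
    unfolding bounded_clinear_def by blast
qed

lemma bounded_clinear_add:
  assumes "bounded_clinear S" "bounded_clinear T"
  shows "bounded_clinear (\<lambda>x. S x + T x)"
proof -
  obtain K L where K: "\<And>x. norm (S x) \<le> norm x * K" and L: "\<And>x. norm (T x) \<le> norm x * L"
    using assms unfolding bounded_clinear_def by metis
  have "norm (S x + T x) \<le> norm x * (K + L)" for x
    using norm_triangle_ineq[of "S x" "T x"] K[of x] L[of x] by (simp add: distrib_left)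
  moreover have "S (x + y) + T (x + y) = (S x + T x) + (S y + T y)" for x y
    by (simp add: bounded_clinear_add_apply[OF assms(1)] bounded_clinear_add_apply[OF assms(2)] add_ac)
  moreover have "S (a *\<^sub>C x) + T (a *\<^sub>C x) = a *\<^sub>C (S x + T x)" for a x
    by (simp add: bounded_clinear_scaleC_apply[OF assms(1)] bounded_clinear_scaleC_apply[OF assms(2)]
        scaleC_add_right)
  ultimately show ?thesis
    unfolding bounded_clinear_def by blast
qed

lemma bounded_clinear_adjoint:
  assumes T: "bounded_clinear T" and adj: "adjoint_pair T T'"
  shows "bounded_clinear T'"
proof -
  have T'_cinner: "cinner z (T' y) = cinner (T z) y" for z y
    using adj unfolding adjoint_pair_def by simp
  have add: "T' (x + y) = T' x + T' y" for x y
    by (rule cinner_eqI) (simp add: T'_cinner cinner_add_right)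
  have scale: "T' (c *\<^sub>C x) = c *\<^sub>C T' x" for c x
    by (rule cinner_eqI) (simp add: T'_cinner cinner_scaleC_right)
  obtain K where "K \<ge> 0" and K: "\<And>x. norm (T x) \<le> norm x * K"
    using bounded_linear.nonneg_bounded[OF bounded_clinear_bounded_linear[OF T]] by blast
  have "norm (T' y) \<le> norm y * K" for y
  proof -
    have "(norm (T' y))\<^sup>2 = Re (cinner (T' y) (T' y))"
      by (rule Re_cinner_self[symmetric])
    also have "\<dots> = Re (cinner (T (T' y)) y)"
      by (simp only: T'_cinner)
    also have "\<dots> \<le> cmod (cinner (T (T' y)) y)"
      by (rule complex_Re_le_cmod)
    also have "\<dots> \<le> norm (T (T' y)) * norm y"
      by (rule norm_cinner_le)
    also have "\<dots> \<le> norm (T' y) * K * norm y"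
      by (intro mult_right_mono K) simp
    finally have le: "norm (T' y) * norm (T' y) \<le> norm (T' y) * (norm y * K)"
      by (simp only: power2_eq_square mult.assoc mult.commute[of K])
    show ?thesis
    proof (cases "T' y = 0")
      case False
      then have "0 < norm (T' y)"
        by simp
      with le show ?thesis
        by (rule mult_left_le_imp_le)
    qed (simp add: \<open>K \<ge> 0\<close>)
  qed
  then show ?thesis
    unfolding bounded_clinear_def using add scale by blast
qed

lemma has_sum_norm_sq_adjoint:
  fixes T :: "'a::chilbert_space \<Rightarrow> 'a"
  assumes E: "is_onb E" and F: "is_onb F" and adj: "adjoint_pair T T'"
    and s: "((\<lambda>e. (norm (T e))\<^sup>2) has_sum s) E"
  shows "((\<lambda>f. (norm (T' f))\<^sup>2) has_sum s) F"
proof (rule nonneg_has_sum_iterated_swap[where q = "\<lambda>e f. (cmod (cinner f (T e)))\<^sup>2", OF _ _ s])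
  show "((\<lambda>f. (cmod (cinner f (T e)))\<^sup>2) has_sum (norm (T e))\<^sup>2) F" for e
    by (rule has_sum_parseval[OF F])
  show "((\<lambda>e. (cmod (cinner f (T e)))\<^sup>2) has_sum (norm (T' f))\<^sup>2) E" for f
  proof -
    have "cmod (cinner f (T e)) = cmod (cinner e (T' f))" for e
      using adj unfolding adjoint_pair_def by (metis cinner_commute complex_mod_cnj)
    then show ?thesis
      using has_sum_parseval[OF E, of "T' f"] by simp
  qed
qed simp

section \<open>Hilbert--Schmidt operators\<close>

lemma hilbert_schmidt_adjoint_pair:
  fixes T :: "'a::chilbert_space \<Rightarrow> 'a"
  assumes "hilbert_schmidt T"
  shows "adjoint_pair T (adj T)"
proof -
  obtain E where E: "is_onb E" and T: "bounded_clinear T"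
    and sq: "(\<lambda>e. (norm (T e))\<^sup>2) summable_on E"
    using assms unfolding hilbert_schmidt_def by blast
  define T' where "T' y = infsum (\<lambda>f. cinner (T f) y *\<^sub>C f) E" for y
  have "cinner (T x) y = cinner x (T' y)" for x y
  proof -
    have "(\<lambda>f. (cmod (cinner (T f) y))\<^sup>2) summable_on E"
    proof (rule summable_on_comparison_test)
      show "(\<lambda>f. (norm (T f))\<^sup>2 * (norm y)\<^sup>2) summable_on E"
        using sq by (rule summable_on_cmult_left)
      show "(cmod (cinner (T f) y))\<^sup>2 \<le> (norm (T f))\<^sup>2 * (norm y)\<^sup>2" for f
        by (metis norm_cinner_le norm_ge_zero power_mono power_mult_distrib)
    qed auto
    then have "((\<lambda>f. cinner (T f) y *\<^sub>C f) has_sum T' y) E"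
      unfolding T'_def by (intro has_sum_infsum summable_on_onb_combination[OF E])
    then have "((\<lambda>f. cinner x (cinner (T f) y *\<^sub>C f)) has_sum cinner x (T' y)) E"
      by (rule has_sum_bounded_linear[OF bounded_linear_cinner_right])
    moreover have "((\<lambda>f. cinner (T (cinner f x *\<^sub>C f)) y) has_sum cinner (T x) y) E"
      using has_sum_bounded_linear[OF bounded_clinear_bounded_linear[OF T] has_sum_onb_expansion[OF E]]
      by (rule has_sum_bounded_linear[OF bounded_linear_cinner_left])
    moreover have "cinner (T (cinner f x *\<^sub>C f)) y = cinner x (cinner (T f) y *\<^sub>C f)" for f
      by (simp add: bounded_clinear_scaleC_apply[OF T] cinner_scaleC_left cinner_scaleC_right
          cinner_commute[of f x] mult.commute)
    ultimately show ?thesis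
      by (simp add: has_sum_unique)
  qed
  then show ?thesis
    by (intro adjoint_pair_adj[of T T']) (simp add: adjoint_pair_def)
qed

lemma hilbert_schmidt_bounded_clinear: "hilbert_schmidt T \<Longrightarrow> bounded_clinear T"
  unfolding hilbert_schmidt_def by blast

lemma is_onb_some_onb:
  fixes T :: "'a::complex_inner \<Rightarrow> 'a"
  assumes "hilbert_schmidt T"
  shows "is_onb (some_onb :: 'a set)"
proof -
  obtain E :: "'a set" where "is_onb E"
    using assms unfolding hilbert_schmidt_def by blast
  then show ?thesis
    unfolding some_onb_def by (rule someI)
qed

lemma hs_norm_nonneg: "hs_norm T \<ge> 0"
  unfolding hs_norm_def by (simp add: infsum_nonneg)

lemma hilbert_schmidt_has_sum_norm_sq:
  fixes T :: "'a::chilbert_space \<Rightarrow> 'a"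
  assumes T: "hilbert_schmidt T" and E: "is_onb E"
  shows "((\<lambda>e. (norm (T e))\<^sup>2) has_sum (hs_norm T)\<^sup>2) E"
    and "((\<lambda>e. (norm (adj T e))\<^sup>2) has_sum (hs_norm T)\<^sup>2) E"
proof -
  obtain E0 s where E0: "is_onb E0" and s: "((\<lambda>e. (norm (T e))\<^sup>2) has_sum s) E0"
    using T unfolding hilbert_schmidt_def summable_on_def by blast
  note adj = hilbert_schmidt_adjoint_pair[OF T]
  have adj_sum: "((\<lambda>e. (norm (adj T e))\<^sup>2) has_sum s) F" if "is_onb F" for F
    by (rule has_sum_norm_sq_adjoint[OF E0 that adj s])
  have sum: "((\<lambda>e. (norm (T e))\<^sup>2) has_sum s) F" if "is_onb F" for F
    by (rule has_sum_norm_sq_adjoint[OF E0 that adjoint_pair_sym[OF adj] adj_sum[OF E0]])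
  have "hs_norm T = sqrt s"
    unfolding hs_norm_def using sum[OF is_onb_some_onb[OF T]] by (simp add: infsumI)
  moreover have "s \<ge> 0"
    using s by (rule has_sum_nonneg) simp
  ultimately have "(hs_norm T)\<^sup>2 = s"
    by simp
  then show "((\<lambda>e. (norm (T e))\<^sup>2) has_sum (hs_norm T)\<^sup>2) E"
    and "((\<lambda>e. (norm (adj T e))\<^sup>2) has_sum (hs_norm T)\<^sup>2) E"
    using sum[OF E] adj_sum[OF E] by simp_all
qed

lemma hilbert_schmidt_adj:
  fixes T :: "'a::chilbert_space \<Rightarrow> 'a"
  assumes "hilbert_schmidt T"
  shows "hilbert_schmidt (adj T)"
proof -
  have "bounded_clinear (adj T)"
    using hilbert_schmidt_bounded_clinear[OF assms] hilbert_schmidt_adjoint_pair[OF assms]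
    by (rule bounded_clinear_adjoint)
  moreover have "(\<lambda>e. (norm (adj T e))\<^sup>2) summable_on some_onb"
    using hilbert_schmidt_has_sum_norm_sq(2)[OF assms is_onb_some_onb[OF assms]]
    by (rule has_sum_imp_summable)
  ultimately show ?thesis
    unfolding hilbert_schmidt_def using is_onb_some_onb[OF assms] by blast
qed

lemma hilbert_schmidt_scaleC:
  fixes T :: "'a::chilbert_space \<Rightarrow> 'a"
  assumes "hilbert_schmidt T"
  shows "hilbert_schmidt (\<lambda>x. c *\<^sub>C T x)"
proof -
  note E = is_onb_some_onb[OF assms]
  have "((\<lambda>e. (norm (c *\<^sub>C T e))\<^sup>2) has_sum (cmod c)\<^sup>2 * (hs_norm T)\<^sup>2) some_onb"
    unfolding norm_scaleC power_mult_distrib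
    by (intro has_sum_cmult_right hilbert_schmidt_has_sum_norm_sq(1)[OF assms E])
  moreover have "bounded_clinear (\<lambda>x. c *\<^sub>C T x)"
    using hilbert_schmidt_bounded_clinear[OF assms] by (rule bounded_clinear_scaleC)
  ultimately show ?thesis
    unfolding hilbert_schmidt_def summable_on_def using E by blast
qed

lemma hilbert_schmidt_add:
  fixes S T :: "'a::chilbert_space \<Rightarrow> 'a"
  assumes S: "hilbert_schmidt S" and T: "hilbert_schmidt T"
  shows "hilbert_schmidt (\<lambda>x. S x + T x)"
proof -
  note E = is_onb_some_onb[OF S]
  have "(\<lambda>e. 2 * ((norm (S e))\<^sup>2 + (norm (T e))\<^sup>2)) summable_on some_onb"
    using hilbert_schmidt_has_sum_norm_sq(1)[OF S E] hilbert_schmidt_has_sum_norm_sq(1)[OF T E]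
    by (intro summable_on_cmult_right summable_on_add has_sum_imp_summable)
  then have "(\<lambda>e. (norm (S e + T e))\<^sup>2) summable_on some_onb"
    by (rule summable_on_comparison_test) (rule norm_add_sq_le, simp)
  moreover have "bounded_clinear (\<lambda>x. S x + T x)"
    using S T by (intro bounded_clinear_add hilbert_schmidt_bounded_clinear)
  ultimately show ?thesis
    unfolding hilbert_schmidt_def using E by blast
qed

lemma hs_norm_scaleC: "hs_norm (\<lambda>x. c *\<^sub>C T x) = cmod c * hs_norm T"
  unfolding hs_norm_def by (simp add: norm_scaleC power_mult_distrib infsum_cmult_right' real_sqrt_mult)

lemma hs_norm_add_sq_le:
  fixes S T :: "'a::chilbert_space \<Rightarrow> 'a"
  assumes S: "hilbert_schmidt S" and T: "hilbert_schmidt T"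
  shows "(hs_norm (\<lambda>x. S x + T x))\<^sup>2 \<le> 2 * ((hs_norm S)\<^sup>2 + (hs_norm T)\<^sup>2)"
proof -
  note E = is_onb_some_onb[OF S]
  have "((\<lambda>e. 2 * ((norm (S e))\<^sup>2 + (norm (T e))\<^sup>2)) has_sum 2 * ((hs_norm S)\<^sup>2 + (hs_norm T)\<^sup>2)) some_onb"
    by (intro has_sum_cmult_right has_sum_add hilbert_schmidt_has_sum_norm_sq(1)[OF S E]
        hilbert_schmidt_has_sum_norm_sq(1)[OF T E])
  with hilbert_schmidt_has_sum_norm_sq(1)[OF hilbert_schmidt_add[OF S T] E] show ?thesis
    by (rule has_sum_mono) (rule norm_add_sq_le)
qed

section \<open>Traces\<close>

lemma has_sum_trace_comm:
  fixes X Y :: "'a::chilbert_space \<Rightarrow> 'a"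
  assumes E: "is_onb E" and X: "adjoint_pair X X'" and Y: "adjoint_pair Y Y'"
    and X_sq: "(\<lambda>e. (norm (X e))\<^sup>2) summable_on E"
    and Y'_sq: "(\<lambda>e. (norm (Y' e))\<^sup>2) summable_on E"
  obtains t where "((\<lambda>e. cinner e (X (Y e))) has_sum t) E"
    and "((\<lambda>e. cinner e (Y (X e))) has_sum t) E"
proof -
  have X_cinner: "cinner e (X f) = cinner (X' e) f" and Y_cinner: "cinner f (Y e) = cinner (Y' f) e" for e f
    using X Y unfolding adjoint_pair_def by (metis cinner_commute)+
  define q where "q f e = cinner (Y' f) e * cinner e (X f)" for f e
  have rows: "(q f has_sum cinner f (Y (X f))) E" for f
    using has_sum_parseval_cinner[OF E, of "Y' f" "X f"] unfolding q_def Y_cinner .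
  have cols: "((\<lambda>f. q f e) has_sum cinner e (X (Y e))) E" for e
    using has_sum_parseval_cinner[OF E, of "X' e" "Y e"]
    unfolding q_def X_cinner Y_cinner by (simp add: mult.commute)
  have "(\<lambda>(f, e). q f e) summable_on E \<times> E"
  proof (rule abs_summable_summable, rule summable_on_comparison_test)
    show "(\<lambda>p. (\<lambda>(f, e). (cmod (cinner e (X f)))\<^sup>2) p + (\<lambda>(f, e). (cmod (cinner e (Y' f)))\<^sup>2) p)
        summable_on E \<times> E"
      by (intro summable_on_add summable_on_onb_coeff_sq_Times[OF E] X_sq Y'_sq)
    show "norm ((\<lambda>(f, e). q f e) p)
        \<le> (\<lambda>(f, e). (cmod (cinner e (X f)))\<^sup>2) p + (\<lambda>(f, e). (cmod (cinner e (Y' f)))\<^sup>2) p" for p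
    proof (cases p)
      case (Pair f e)
      let ?a = "cmod (cinner e (X f))" and ?b = "cmod (cinner e (Y' f))"
      have "norm (q f e) = ?a * ?b"
        unfolding q_def norm_mult by (metis cinner_commute complex_mod_cnj mult.commute)
      moreover have "2 * (?a * ?b) \<le> ?a\<^sup>2 + ?b\<^sup>2"
        using sum_squares_bound[of ?a ?b] by (simp add: mult.assoc)
      moreover have "0 \<le> ?a * ?b"
        by simp
      ultimately show ?thesis
        unfolding Pair prod.case by linarith
    qed
  qed simp
  then obtain t where "((\<lambda>f. cinner f (Y (X f))) has_sum t) E" "((\<lambda>e. cinner e (X (Y e))) has_sum t) E"
    using rows cols by (rule has_sum_iterated_swap)
  then show ?thesis
    using that by blast
qed

lemma hilbert_schmidt_has_sum_trace:
  fixes X Y :: "'a::chilbert_space \<Rightarrow> 'a"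
  assumes X: "hilbert_schmidt X" and Y: "hilbert_schmidt Y"
  shows "((\<lambda>e. cinner e (X (Y e))) has_sum trace (X \<circ> Y)) some_onb"
proof -
  note E = is_onb_some_onb[OF X]
  obtain t where "((\<lambda>e. cinner e (X (Y e))) has_sum t) some_onb"
    using E hilbert_schmidt_adjoint_pair[OF X] hilbert_schmidt_adjoint_pair[OF Y]
      has_sum_imp_summable[OF hilbert_schmidt_has_sum_norm_sq(1)[OF X E]]
      has_sum_imp_summable[OF hilbert_schmidt_has_sum_norm_sq(2)[OF Y E]]
    by (rule has_sum_trace_comm)
  then show ?thesis
    unfolding trace_def o_def by (simp add: infsumI)
qed

lemma trace_comm:
  fixes X Y :: "'a::chilbert_space \<Rightarrow> 'a"
  assumes X: "hilbert_schmidt X" and Y: "hilbert_schmidt Y"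
  shows "trace (X \<circ> Y) = trace (Y \<circ> X)"
proof -
  note E = is_onb_some_onb[OF X]
  obtain t where "((\<lambda>e. cinner e (X (Y e))) has_sum t) some_onb"
    and "((\<lambda>e. cinner e (Y (X e))) has_sum t) some_onb"
    using E hilbert_schmidt_adjoint_pair[OF X] hilbert_schmidt_adjoint_pair[OF Y]
      has_sum_imp_summable[OF hilbert_schmidt_has_sum_norm_sq(1)[OF X E]]
      has_sum_imp_summable[OF hilbert_schmidt_has_sum_norm_sq(2)[OF Y E]]
    by (rule has_sum_trace_comm)
  then show ?thesis
    unfolding trace_def o_def by (simp add: infsumI)
qed

lemma trace_scaleC: "trace (\<lambda>x. c *\<^sub>C T x) = c * trace T"
  unfolding trace_def by (simp add: cinner_scaleC_right infsum_cmult_right')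

lemma trace_square_add:
  fixes B C :: "'a::chilbert_space \<Rightarrow> 'a"
  assumes B: "hilbert_schmidt B" and C: "hilbert_schmidt C"
  shows "trace ((\<lambda>x. B x + C x) \<circ> (\<lambda>x. B x + C x))
    = trace (B \<circ> B) + trace (C \<circ> C) + 2 * trace (B \<circ> C)"
proof -
  have "cinner e (B (B e + C e) + C (B e + C e))
      = cinner e (B (B e)) + cinner e (C (C e)) + cinner e (B (C e)) + cinner e (C (B e))" for e
    using B C unfolding hilbert_schmidt_def
    by (simp add: bounded_clinear_add_apply cinner_add_right)
  then have "((\<lambda>e. cinner e (B (B e + C e) + C (B e + C e)))
      has_sum trace (B \<circ> B) + trace (C \<circ> C) + trace (B \<circ> C) + trace (C \<circ> B)) some_onb"
    by (simp only:) (intro has_sum_add hilbert_schmidt_has_sum_trace B C)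
  then have "infsum (\<lambda>e. cinner e (B (B e + C e) + C (B e + C e))) some_onb
      = trace (B \<circ> B) + trace (C \<circ> C) + trace (B \<circ> C) + trace (C \<circ> B)"
    by (rule infsumI)
  then show ?thesis
    unfolding trace_comm[OF C B] by (simp add: trace_def)
qed

lemma hs_norm_add_sq:
  fixes B C :: "'a::chilbert_space \<Rightarrow> 'a"
  assumes B: "hilbert_schmidt B" and C: "hilbert_schmidt C"
  shows "(hs_norm (\<lambda>x. B x + C x))\<^sup>2 = (hs_norm B)\<^sup>2 + (hs_norm C)\<^sup>2 + 2 * Re (trace (B \<circ> adj C))"
proof -
  note E = is_onb_some_onb[OF B]
  have Re_cinner: "Re (cinner (B e) (C e)) = Re (cinner e (adj C (B e)))" for e
    using hilbert_schmidt_adjoint_pair[OF C] unfolding adjoint_pair_def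
    by (metis cinner_commute complex_cnj_cnj cnj.sel(1))
  have "((\<lambda>e. (norm (B e + C e))\<^sup>2)
      has_sum (hs_norm B)\<^sup>2 + (hs_norm C)\<^sup>2 + 2 * Re (trace (adj C \<circ> B))) some_onb"
    unfolding norm_add_sq Re_cinner
    by (intro has_sum_add has_sum_cmult_right has_sum_Re hilbert_schmidt_has_sum_norm_sq(1)
        hilbert_schmidt_has_sum_trace hilbert_schmidt_adj B C E)
  then have "(hs_norm B)\<^sup>2 + (hs_norm C)\<^sup>2 + 2 * Re (trace (adj C \<circ> B)) = (hs_norm (\<lambda>x. B x + C x))\<^sup>2"
    using hilbert_schmidt_has_sum_norm_sq(1)[OF hilbert_schmidt_add[OF B C] E] by (rule has_sum_unique)
  then show ?thesis
    unfolding trace_comm[OF hilbert_schmidt_adj[OF C] B] by simp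
qed

section \<open>The real part of a Hilbert--Schmidt operator\<close>

lemma norm_op_Re: "norm (op_Re T x) = norm (T x + adj T x) / 2"
  unfolding op_Re_def by (simp add: norm_scaleC)

lemma hs_norm_op_Re_le:
  fixes T :: "'a::chilbert_space \<Rightarrow> 'a"
  assumes T: "hilbert_schmidt T"
  shows "hs_norm (op_Re T) \<le> hs_norm T"
proof -
  note E = is_onb_some_onb[OF T]
  have le: "(norm (op_Re T e))\<^sup>2 \<le> ((norm (T e))\<^sup>2 + (norm (adj T e))\<^sup>2) / 2" for e
    using norm_add_sq_le[of "T e" "adj T e"] by (simp add: norm_op_Re power_divide)
  have sum: "((\<lambda>e. ((norm (T e))\<^sup>2 + (norm (adj T e))\<^sup>2) / 2) has_sum (hs_norm T)\<^sup>2) some_onb"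
    using has_sum_divide_const[OF has_sum_add[OF hilbert_schmidt_has_sum_norm_sq[OF T E]], of 2]
    by simp
  have "(\<lambda>e. (norm (op_Re T e))\<^sup>2) summable_on some_onb"
    by (rule summable_on_comparison_test[OF has_sum_imp_summable[OF sum] le]) simp
  then have "infsum (\<lambda>e. (norm (op_Re T e))\<^sup>2) some_onb \<le> (hs_norm T)\<^sup>2"
    using sum le by (rule has_sum_mono[OF has_sum_infsum])
  then show ?thesis
    unfolding hs_norm_def[of "op_Re T"] using hs_norm_nonneg[of T] real_le_lsqrt by blast
qed

lemma hs_norm_op_Re_sq:
  fixes T :: "'a::chilbert_space \<Rightarrow> 'a"
  assumes T: "hilbert_schmidt T"
  shows "(hs_norm (op_Re T))\<^sup>2 = (hs_norm T)\<^sup>2 / 2 + Re (trace (T \<circ> T)) / 2"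
proof -
  note E = is_onb_some_onb[OF T]
  have "Re (cinner (T e) (adj T e)) = Re (cinner e (T (T e)))" for e
    using hilbert_schmidt_adjoint_pair[OF T] unfolding adjoint_pair_def
    by (metis cinner_commute complex_cnj_cnj cnj.sel(1))
  then have "(norm (op_Re T e))\<^sup>2
      = ((norm (T e))\<^sup>2 + (norm (adj T e))\<^sup>2 + 2 * Re (cinner e (T (T e)))) / 4" for e
    by (simp add: norm_op_Re power_divide norm_add_sq)
  then have "((\<lambda>e. (norm (op_Re T e))\<^sup>2)
      has_sum ((hs_norm T)\<^sup>2 + (hs_norm T)\<^sup>2 + 2 * Re (trace (T \<circ> T))) / 4) some_onb"
    by (simp only:) (intro has_sum_divide_const has_sum_add has_sum_cmult_right has_sum_Re
        hilbert_schmidt_has_sum_norm_sq[OF T E] hilbert_schmidt_has_sum_trace[OF T T])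
  moreover from this have "0 \<le> ((hs_norm T)\<^sup>2 + (hs_norm T)\<^sup>2 + 2 * Re (trace (T \<circ> T))) / 4"
    by (rule has_sum_nonneg) simp
  ultimately show ?thesis
    unfolding hs_norm_def[of "op_Re T"] by (simp add: infsumI)
qed

section \<open>The Euclidean operator radius\<close>

lemma hs_norm_op_Re_scaleC_sq:
  fixes A :: "'a::chilbert_space \<Rightarrow> 'a"
  assumes A: "hilbert_schmidt A"
  shows "(hs_norm (op_Re (\<lambda>x. c *\<^sub>C A x)))\<^sup>2
    = (cmod c)\<^sup>2 * (hs_norm A)\<^sup>2 / 2 + Re (c\<^sup>2 * trace (A \<circ> A)) / 2"
proof -
  have "(\<lambda>x. c *\<^sub>C A x) \<circ> (\<lambda>x. c *\<^sub>C A x) = (\<lambda>x. c\<^sup>2 *\<^sub>C (A \<circ> A) x)"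
    unfolding comp_def
    by (simp add: bounded_clinear_scaleC_apply[OF hilbert_schmidt_bounded_clinear[OF A]]
        scaleC_scaleC power2_eq_square)
  then have "trace ((\<lambda>x. c *\<^sub>C A x) \<circ> (\<lambda>x. c *\<^sub>C A x)) = c\<^sup>2 * trace (A \<circ> A)"
    by (simp only: trace_scaleC)
  then show ?thesis
    using hs_norm_op_Re_sq[OF hilbert_schmidt_scaleC[OF A]]
    by (simp add: hs_norm_scaleC power_mult_distrib)
qed

lemma Re_cis_half_Arg_sq_mult: "Re ((cis (- Arg z / 2))\<^sup>2 * z) = cmod z"
proof -
  have "(cis (- Arg z / 2))\<^sup>2 * z = complex_of_real (cmod z) * (cis (- Arg z) * cis (Arg z))"
    by (metis power2_eq_square cis_mult field_sum_of_halves minus_add_distrib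
        mult.left_commute rcis_cmod_Arg rcis_def)
  then show ?thesis
    by (simp add: cis_mult)
qed

lemma hs_norm_op_Re_rotated_sq:
  fixes A :: "'a::chilbert_space \<Rightarrow> 'a"
  assumes A: "hilbert_schmidt A"
  defines "\<theta> \<equiv> - Arg (trace (A \<circ> A)) / 2" and "l \<equiv> complex_of_real (1 / sqrt 2)"
  shows "(hs_norm (op_Re (\<lambda>x. (cis \<theta> * l) *\<^sub>C A x)))\<^sup>2
    = 1/4 * cmod (trace (A \<circ> A)) + 1/4 * (hs_norm A)\<^sup>2"
proof -
  have "l\<^sup>2 = complex_of_real ((1 / sqrt 2)\<^sup>2)"
    unfolding l_def by (rule of_real_power[symmetric])
  then have trace_sq: "(cis \<theta> * l)\<^sup>2 * trace (A \<circ> A) = (cis \<theta>)\<^sup>2 * trace (A \<circ> A) / 2"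
    by (simp add: power_mult_distrib power_divide)
  have "Re ((cis \<theta>)\<^sup>2 * trace (A \<circ> A)) = cmod (trace (A \<circ> A))"
    unfolding \<theta>_def by (rule Re_cis_half_Arg_sq_mult)
  then have Re_trace: "Re ((cis \<theta> * l)\<^sup>2 * trace (A \<circ> A)) = cmod (trace (A \<circ> A)) / 2"
    unfolding trace_sq Re_divide_numeral by simp
  have norm_cis_l: "(cmod (cis \<theta> * l))\<^sup>2 = 1 / 2"
    unfolding l_def norm_mult norm_of_real by (simp add: power_divide)
  show ?thesis
    unfolding hs_norm_op_Re_scaleC_sq[OF A] Re_trace norm_cis_l by simp
qed

lemma hs_norm_op_Re_combination_le:
  fixes B C :: "'a::chilbert_space \<Rightarrow> 'a"
  assumes B: "hilbert_schmidt B" and C: "hilbert_schmidt C"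
    and l: "cmod l1 \<le> 1" "cmod l2 \<le> 1"
  shows "hs_norm (op_Re (\<lambda>x. exp (\<i> * complex_of_real \<theta>) *\<^sub>C (l1 *\<^sub>C B x + l2 *\<^sub>C C x)))
    \<le> sqrt (2 * ((hs_norm B)\<^sup>2 + (hs_norm C)\<^sup>2))"
proof -
  define T where "T x = l1 *\<^sub>C B x + l2 *\<^sub>C C x" for x
  have T: "hilbert_schmidt T"
    unfolding T_def by (intro hilbert_schmidt_add hilbert_schmidt_scaleC B C)
  have "hs_norm (op_Re (\<lambda>x. exp (\<i> * complex_of_real \<theta>) *\<^sub>C T x))
      \<le> hs_norm (\<lambda>x. exp (\<i> * complex_of_real \<theta>) *\<^sub>C T x)"
    by (intro hs_norm_op_Re_le hilbert_schmidt_scaleC T)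
  also have "\<dots> = hs_norm T"
    by (simp add: hs_norm_scaleC)
  also have "\<dots> \<le> sqrt (2 * ((cmod l1 * hs_norm B)\<^sup>2 + (cmod l2 * hs_norm C)\<^sup>2))"
    using hs_norm_add_sq_le[OF hilbert_schmidt_scaleC[OF B] hilbert_schmidt_scaleC[OF C], of l1 l2]
    unfolding T_def[abs_def] hs_norm_scaleC by (simp add: real_le_rsqrt)
  also have "\<dots> \<le> sqrt (2 * ((hs_norm B)\<^sup>2 + (hs_norm C)\<^sup>2))"
    using l hs_norm_nonneg[of B] hs_norm_nonneg[of C]
    by (intro real_sqrt_le_mono mult_left_mono add_mono power_mono mult_left_le_one_le) simp_all
  finally show ?thesis
    unfolding T_def .
qed

lemma hs_norm_op_Re_le_w2e:
  fixes B C :: "'a::chilbert_space \<Rightarrow> 'a"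
  assumes B: "hilbert_schmidt B" and C: "hilbert_schmidt C"
    and l: "(cmod l1)\<^sup>2 + (cmod l2)\<^sup>2 \<le> 1"
  shows "hs_norm (op_Re (\<lambda>x. exp (\<i> * complex_of_real \<theta>) *\<^sub>C (l1 *\<^sub>C B x + l2 *\<^sub>C C x)))
    \<le> w2e B C"
proof -
  define A where "A = {(l1, l2, \<theta>::real). (cmod l1)\<^sup>2 + (cmod l2)\<^sup>2 \<le> (1::real)}"
  define f where "f p = (case p of (l1, l2, \<theta>) \<Rightarrow>
      hs_norm (op_Re (\<lambda>x. exp (\<i> * complex_of_real \<theta>) *\<^sub>C (l1 *\<^sub>C B x + l2 *\<^sub>C C x))))" for p
  have cmod_le: "cmod m \<le> 1" if "(cmod m)\<^sup>2 + (cmod m')\<^sup>2 \<le> 1" for m m' :: complex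
  proof -
    have "(cmod m)\<^sup>2 \<le> 1"
      using that zero_le_power2[of "cmod m'"] by linarith
    then show ?thesis
      by (simp add: abs_square_le_1)
  qed
  have "f p \<le> sqrt (2 * ((hs_norm B)\<^sup>2 + (hs_norm C)\<^sup>2))" if "p \<in> A" for p
  proof -
    obtain m1 m2 t where p: "p = (m1, m2, t)"
      by (cases p)
    with that have "(cmod m1)\<^sup>2 + (cmod m2)\<^sup>2 \<le> 1"
      unfolding A_def by simp
    then have "cmod m1 \<le> 1" "cmod m2 \<le> 1"
      using cmod_le[of m1 m2] cmod_le[of m2 m1] by (simp_all add: add.commute)
    then show ?thesis
      unfolding p f_def prod.case by (rule hs_norm_op_Re_combination_le[OF B C])
  qed
  \<comment> \<open>\<open>w2e\<close> is a conditionally complete supremum: it dominates its values only on a bounded set\<close>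
  then have "bdd_above (f ` A)"
    by (rule bdd_aboveI2)
  moreover have "(l1, l2, \<theta>) \<in> A"
    using l unfolding A_def by simp
  ultimately have "f (l1, l2, \<theta>) \<le> (SUP p \<in> A. f p)"
    by (intro cSUP_upper)
  then show ?thesis
    unfolding w2e_def f_def A_def by simp
qed

theorem theorem3p1:
  fixes B C :: "'a::chilbert_space \<Rightarrow> 'a"
  assumes "hilbert_schmidt B" and "hilbert_schmidt C"
  shows "(w2e B C)\<^sup>2 \<ge>
     1/4 * cmod (trace (B \<circ> B) + trace (C \<circ> C) + 2 * trace (B \<circ> C))
     + 1/4 * ((hs_norm B)\<^sup>2 + (hs_norm C)\<^sup>2 + 2 * Re (trace (B \<circ> adj C)))"
proof -
  define A where "A = (\<lambda>x. B x + C x)"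
  define \<theta> where "\<theta> = - Arg (trace (A \<circ> A)) / 2"
  define l where "l = complex_of_real (1 / sqrt 2)"
  have A: "hilbert_schmidt A"
    unfolding A_def using assms by (rule hilbert_schmidt_add)
  have "1/4 * cmod (trace (A \<circ> A)) + 1/4 * (hs_norm A)\<^sup>2
      = (hs_norm (op_Re (\<lambda>x. (cis \<theta> * l) *\<^sub>C A x)))\<^sup>2"
    unfolding \<theta>_def l_def by (rule hs_norm_op_Re_rotated_sq[OF A, symmetric])
  also have "(\<lambda>x. (cis \<theta> * l) *\<^sub>C A x) = (\<lambda>x. exp (\<i> * complex_of_real \<theta>) *\<^sub>C (l *\<^sub>C B x + l *\<^sub>C C x))"
    unfolding A_def cis_conv_exp by (simp add: scaleC_add_right scaleC_scaleC)
  also have "(hs_norm (op_Re \<dots>))\<^sup>2 \<le> (w2e B C)\<^sup>2"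
    using hs_norm_op_Re_le_w2e[OF assms, of l l \<theta>]
    unfolding l_def norm_of_real by (intro power_mono hs_norm_nonneg) (simp add: power_divide)
  finally show ?thesis
    unfolding A_def trace_square_add[OF assms] hs_norm_add_sq[OF assms] by simp
qed

end
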